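(* Let $N$ be a non-orientable $3$-manifold triangulated by finitely many ideal hyperbolic tetrahedra $A_i$. The triangulation bestows a hyperbolic structure around the edge cycle $[e]=\{e_{i_1,j_1},\dots,e_{i_n,j_n}\}$ if and only if $$\prod_{l=1}^n \frac{z(e_{i_l,j_l})^{\epsilon_l}}{\overline{z(e_{i_l,j_l})}^{\,1-\epsilon_l}}=1\qquad\text{and}\qquad \sum_{l=1}^n\arg\big(z(e_{i_l,j_l})\big)=2\pi,$$ where $z(e_{i_l,j_l})$ is the edge invariant of $e_{i_l,j_l}$ and $\epsilon_l\in\{0,1\}$ is such that, in the gluing around $[e]$, a coherent orientation of the tetrahedra is obtained by gluing a copy of $A_{i_l}$ with its orientation reversed if $\epsilon_l=0$ and with its original orientation if $\epsilon_l=1$, with the orientation of $A_{i_1}$ kept as given.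
   Context: An ideal tetrahedron is a geodesic tetrahedron in $\mathbb{H}^3$ with all vertices on $\partial_\infty\mathbb{H}^3=\mathbb{C}\cup\{\infty\}$. After an orientation-preserving isometry (with respect to the given orientation of the tetrahedron) its vertices are $0,1,\infty,z$, and the edge from $z$ to $\infty$ has edge invariant $z$. An edge cycle is the set of edges of tetrahedra identified to a single edge of $N$. *)

theory Defs
  imports "HOL-Analysis.Analysis"
begin

(* Local model of the gluing of ideal tetrahedra around an edge cycle [e].
   All copies are developed in the upper half space model around the common
   edge from 0 to \<infinity>.  The l-th copy (l = 0..n-1) is the ideal tetrahedron
   with vertices 0, \<infinity>, w l, w (Suc l); consecutive copies share the face
   (0, \<infinity>, w (Suc l)).  *)

(* Edge invariant of the edge 0\<infinity> of the positively oriented ideal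
   tetrahedron with vertices 0, \<infinity>, a, b (normalising a to 1, b becomes
   the edge invariant). *)
definition edge_inv_pos :: "complex \<Rightarrow> complex \<Rightarrow> complex" where
  "edge_inv_pos a b = b / a"

(* Edge invariant, with respect to the ORIGINAL orientation of A_{i_l}, of the
   developed copy with vertices 0, \<infinity>, a, b.  If e = 1 the copy carries its
   original orientation.  If e = 0 it was glued with reversed orientation:
   an orientation preserving (for the original orientation) normalisation is
   then obtained through the mirror image (complex conjugation), in which the
   positive cyclic order of the two remaining vertices is swapped. *)
definition copy_edge_inv :: "nat \<Rightarrow> complex \<Rightarrow> complex \<Rightarrow> complex" where
  "copy_edge_inv e a b =
     (if e = 1 then edge_inv_pos a b else edge_inv_pos (cnj b) (cnj a))"

(* The projection to C of a neighbourhood of the edge 0\<infinity> inside the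
   tetrahedron 0, \<infinity>, a, b : the open wedge spanned by a and b. *)
definition open_wedge :: "complex \<Rightarrow> complex \<Rightarrow> complex set" where
  "open_wedge a b = {of_real s * a + of_real t * b | s t. s > 0 \<and> t > 0}"

(* w is the developing sequence of the cycle: the copies are coherently
   (positively) oriented and carry the prescribed edge invariants. *)
definition developing_seq ::
    "(nat \<Rightarrow> complex) \<Rightarrow> (nat \<Rightarrow> nat) \<Rightarrow> nat \<Rightarrow> (nat \<Rightarrow> complex) \<Rightarrow> bool" where
  "developing_seq z eps n w \<longleftrightarrow>
     w 0 = 1 \<and>
     (\<forall>l<n. w (Suc l) \<noteq> 0 \<and> Im (w (Suc l) / w l) > 0 \<and>
             copy_edge_inv (eps l) (w l) (w (Suc l)) = z l)"

(* The triangulation bestows a hyperbolic structure around the edge: the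
   holonomy around the edge (the Moebius map fixing 0, \<infinity> and sending
   w n to w 0) is trivial, and the developed tetrahedra fit together around
   the edge exactly once (their wedges have disjoint interiors and cover a
   full neighbourhood of the edge). *)
definition hyperbolic_around_edge ::
    "(nat \<Rightarrow> complex) \<Rightarrow> (nat \<Rightarrow> nat) \<Rightarrow> nat \<Rightarrow> bool" where
  "hyperbolic_around_edge z eps n \<longleftrightarrow>
     (\<exists>w. developing_seq z eps n w \<and> w n = w 0 \<and>
        (\<forall>l<n. \<forall>m<n. l \<noteq> m \<longrightarrow>
            open_wedge (w l) (w (Suc l)) \<inter> open_wedge (w m) (w (Suc m)) = {}) \<and>
        (\<Union>l<n. closure (open_wedge (w l) (w (Suc l)))) = UNIV)"

end

(* Gluing the copies one after the other around the edge determines the developing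
   sequence uniquely: w (l+1) = w l * g l, where g l is z l or 1 / cnj (z l) according
   to the orientation of the l-th copy.  Both choices have argument Arg (z l) in (0, pi),
   so w l has argument Phi l = sum of Arg (z k) for k < l, and the l-th tetrahedron
   projects onto the open sector between the angles Phi l and Phi (l+1).  Trivial
   holonomy w n = w 0 = 1 is the product condition, while the sectors are pairwise
   disjoint iff Phi n <= 2 pi and their closures cover the plane iff Phi n >= 2 pi. *)

theory Submission
  imports Defs
begin

lemma open_wedge_1_iff:
  assumes "Im q > 0"
  shows "y \<in> open_wedge 1 q \<longleftrightarrow> Im y > 0 \<and> Im (y / q) < 0"
proof
  assume "y \<in> open_wedge 1 q"
  then obtain s t :: real where st: "s > 0" "t > 0" "y = of_real s + of_real t * q"
    unfolding open_wedge_def by auto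
  have q0: "q \<noteq> 0" using assms by auto
  have "Im y = t * Im q" using st by simp
  moreover have "y / q = of_real s / q + of_real t" using st q0 by (simp add: field_simps)
  moreover have "Im (of_real s / q) = - s * Im q / (cmod q)\<^sup>2"
    by (simp add: Im_divide cmod_power2)
  ultimately show "Im y > 0 \<and> Im (y / q) < 0" using st assms q0
    by (simp add: divide_neg_pos)
next
  assume y: "Im y > 0 \<and> Im (y / q) < 0"
  define t where "t = Im y / Im q"
  define s where "s = Re y - t * Re q"
  have q0: "q \<noteq> 0" using assms by auto
  have "Im (y / q) = (Im y * Re q - Re y * Im q) / (cmod q)\<^sup>2"
    by (simp add: Im_divide cmod_power2 algebra_simps)
  then have "Im y * Re q - Re y * Im q < 0"
    using y q0 by (simp add: divide_less_0_iff)
  then have "s > 0"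
    using assms unfolding s_def t_def by (simp add: field_simps)
  moreover have "t > 0" using y assms unfolding t_def by simp
  moreover have "y = of_real s + of_real t * q"
    using assms by (simp add: complex_eq_iff s_def t_def)
  ultimately show "y \<in> open_wedge 1 q"
    unfolding open_wedge_def by auto
qed

lemma open_wedge_iff_Im:
  assumes "a \<noteq> 0" "Im (b / a) > 0"
  shows "x \<in> open_wedge a b \<longleftrightarrow> Im (x / a) > 0 \<and> Im (x / b) < 0"
proof -
  have "x = of_real s * a + of_real t * b \<longleftrightarrow> x / a = of_real s * 1 + of_real t * (b / a)"
    for s t using assms(1) by (auto simp: field_simps)
  then have "x \<in> open_wedge a b \<longleftrightarrow> x / a \<in> open_wedge 1 (b / a)"
    unfolding open_wedge_def by auto
  moreover have "x / a / (b / a) = x / b" using assms by (auto simp: field_simps)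
  ultimately show ?thesis using open_wedge_1_iff[OF assms(2)] by simp
qed

lemma rcis_eq_imp_angle_eq:
  assumes "rcis r \<alpha> = rcis s \<beta>" "r > 0" "s > 0" "\<bar>\<alpha> - \<beta>\<bar> < 2 * pi"
  shows "\<alpha> = \<beta>"
proof (rule is_Arg_eqI)
  have is_Arg_rcis: "is_Arg (rcis r \<phi>) \<phi>" if "r > 0" for r \<phi>
    using that by (simp add: is_Arg_def rcis_def norm_mult flip: cis_conv_exp)
  show "is_Arg (rcis r \<alpha>) \<alpha>" using is_Arg_rcis assms(2) .
  show "is_Arg (rcis r \<alpha>) \<beta>" unfolding assms(1) using is_Arg_rcis assms(3) .
qed (use assms in auto)

definition open_sector :: "real \<Rightarrow> real \<Rightarrow> complex set" where
  "open_sector \<alpha> \<beta> = {rcis r \<psi> | r \<psi>. r > 0 \<and> \<alpha> < \<psi> \<and> \<psi> < \<beta>}"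

lemma open_wedge_rcis_eq_open_sector:
  assumes "\<rho> > 0" "\<sigma> > 0" "\<alpha> < \<beta>" "\<beta> < \<alpha> + pi"
  shows "open_wedge (rcis \<rho> \<alpha>) (rcis \<sigma> \<beta>) = open_sector \<alpha> \<beta>"
proof -
  have ne: "rcis \<rho> \<alpha> \<noteq> 0" using assms by simp
  have upper: "Im (rcis \<sigma> \<beta> / rcis \<rho> \<alpha>) > 0"
    using assms by (simp add: rcis_divide sin_gt_zero)
  have rcis_mem: "rcis r \<psi> \<in> open_wedge (rcis \<rho> \<alpha>) (rcis \<sigma> \<beta>) \<longleftrightarrow>
      sin (\<psi> - \<alpha>) > 0 \<and> sin (\<psi> - \<beta>) < 0" if "r > 0" for r \<psi>
    using open_wedge_iff_Im[OF ne upper] that assms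
    by (simp add: rcis_divide zero_less_divide_iff divide_less_0_iff zero_less_mult_iff mult_less_0_iff)
  show ?thesis
  proof (intro set_eqI iffI)
    fix x assume x: "x \<in> open_wedge (rcis \<rho> \<alpha>) (rcis \<sigma> \<beta>)"
    \<comment> \<open>After rotating by \<open>-\<alpha>\<close>, x lies in the upper half plane, where \<open>Arg\<close> takes values in (0, pi).\<close>
    define y where "y = x / cis \<alpha>"
    have "x / rcis \<rho> \<alpha> = y / of_real \<rho>" by (simp add: y_def rcis_def)
    then have "Im y > 0"
      using x assms open_wedge_iff_Im[OF ne upper] by (simp add: zero_less_divide_iff)
    then have Arg_y: "0 < Arg y" "Arg y < pi" by (simp_all flip: Arg_lt_pi)
    have "rcis (cmod x) (\<alpha> + Arg y) = cis \<alpha> * rcis (cmod y) (Arg y)"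
      by (simp add: y_def rcis_def norm_divide cis_mult [symmetric] mult_ac)
    also have "\<dots> = x" by (simp add: rcis_cmod_Arg y_def)
    finally have x_polar: "x = rcis (cmod x) (\<alpha> + Arg y)" ..
    have "x \<noteq> 0" using \<open>Im y > 0\<close> y_def by auto
    then have "sin (\<alpha> + Arg y - \<beta>) < 0"
      using rcis_mem x x_polar by (metis zero_less_norm_iff)
    moreover have "sin (\<alpha> + Arg y - \<beta>) \<ge> 0" if "\<beta> \<le> \<alpha> + Arg y"
      using that Arg_y assms by (intro sin_ge_zero) auto
    ultimately have "\<alpha> + Arg y < \<beta>" by linarith
    with x_polar Arg_y \<open>x \<noteq> 0\<close> show "x \<in> open_sector \<alpha> \<beta>"
      unfolding open_sector_def by (intro CollectI exI[of _ "cmod x"] exI[of _ "\<alpha> + Arg y"]) auto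
  next
    fix x assume "x \<in> open_sector \<alpha> \<beta>"
    then obtain r \<psi> where x: "x = rcis r \<psi>" "r > 0" "\<alpha> < \<psi>" "\<psi> < \<beta>"
      unfolding open_sector_def by blast
    have "sin (\<psi> - \<alpha>) > 0" "sin (\<beta> - \<psi>) > 0"
      using x assms by (auto intro: sin_gt_zero)
    moreover have "sin (\<psi> - \<beta>) = - sin (\<beta> - \<psi>)"
      by (metis minus_diff_eq sin_minus)
    ultimately show "x \<in> open_wedge (rcis \<rho> \<alpha>) (rcis \<sigma> \<beta>)"
      using rcis_mem x by simp
  qed
qed

lemma rcis_mem_closure_open_sector:
  assumes "r \<ge> 0" "\<alpha> \<le> \<psi>" "\<psi> < \<beta>"
  shows "rcis r \<psi> \<in> closure (open_sector \<alpha> \<beta>)"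
proof -
  let ?f = "\<lambda>t. rcis (r + t) (\<psi> + t)"
  have "?f ` {0<..<\<beta> - \<psi>} \<subseteq> closure (open_sector \<alpha> \<beta>)"
    using assms closure_subset unfolding open_sector_def by force
  then have "?f ` closure {0<..<\<beta> - \<psi>} \<subseteq> closure (open_sector \<alpha> \<beta>)"
    by (intro image_closure_subset continuous_intros) auto
  moreover have "0 \<in> closure {0<..<\<beta> - \<psi>}" using assms by simp
  ultimately show ?thesis by force
qed

lemma closure_open_sector_subset: "closure (open_sector \<alpha> \<beta>) \<subseteq> complex_cone \<alpha> \<beta>"
proof (rule closure_minimal)
  show "open_sector \<alpha> \<beta> \<subseteq> complex_cone \<alpha> \<beta>"
    by (force simp: open_sector_def in_complex_cone_iff closed_segment_eq_real_ivl)
qed auto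

lemma exists_crossing_step:
  fixes \<Phi> :: "nat \<Rightarrow> real"
  assumes "\<Phi> 0 \<le> \<psi>" "\<psi> < \<Phi> n"
  shows "\<exists>l<n. \<Phi> l \<le> \<psi> \<and> \<psi> < \<Phi> (Suc l)"
  using assms
proof (induction n)
  case (Suc n)
  then show ?case
    by (cases "\<psi> < \<Phi> n") (auto intro: less_SucI)
qed simp

lemma open_sectors_disjoint_iff:
  fixes \<Phi> :: "nat \<Rightarrow> real"
  assumes start: "\<Phi> 0 = 0"
    and steps: "\<And>l. l < n \<Longrightarrow> \<Phi> l < \<Phi> (Suc l) \<and> \<Phi> (Suc l) \<le> \<Phi> l + 2 * pi"
  shows "(\<forall>l<n. \<forall>m<n. l \<noteq> m \<longrightarrow>
            open_sector (\<Phi> l) (\<Phi> (Suc l)) \<inter> open_sector (\<Phi> m) (\<Phi> (Suc m)) = {}) \<longleftrightarrow>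
         \<Phi> n \<le> 2 * pi"
    (is "?disjoint \<longleftrightarrow> _")
proof
  assume ?disjoint
  show "\<Phi> n \<le> 2 * pi"
  proof (rule ccontr)
    assume "\<not> \<Phi> n \<le> 2 * pi"
    then obtain m where m: "m < n" "\<Phi> m \<le> 2 * pi" "2 * pi < \<Phi> (Suc m)"
      using exists_crossing_step[of \<Phi> "2 * pi" n] start by auto
    then have first_step: "0 < \<Phi> 1" "\<Phi> 1 \<le> 2 * pi"
      using steps[of 0] start by auto
    with m have "m \<noteq> 0" by (metis One_nat_def not_le)
    define \<mu> where "\<mu> = min (\<Phi> 1) (\<Phi> (Suc m) - 2 * pi)"
    have \<mu>: "0 < \<mu>" "\<mu> \<le> \<Phi> 1" "\<mu> \<le> \<Phi> (Suc m) - 2 * pi"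
      using first_step m unfolding \<mu>_def by auto
    have "rcis 1 (2 * pi + \<mu> / 2) \<in> open_sector (\<Phi> m) (\<Phi> (Suc m))"
      using m \<mu> unfolding open_sector_def by force
    moreover have "rcis 1 (2 * pi + \<mu> / 2) = rcis 1 (\<mu> / 2)"
      by (simp add: rcis_def flip: cis_mult)
    moreover have "rcis 1 (\<mu> / 2) \<in> open_sector (\<Phi> 0) (\<Phi> (Suc 0))"
      using start \<mu> unfolding open_sector_def by force
    ultimately show False
      using \<open>?disjoint\<close> m \<open>m \<noteq> 0\<close> by fastforce
  qed
next
  assume total: "\<Phi> n \<le> 2 * pi"
  have mono: "\<Phi> i \<le> \<Phi> j" if "i \<le> j" "j \<le> n" for i j
    using lift_Suc_mono_le_ivl[of "{..<n}" \<Phi> i j] steps that by fastforce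
  have "open_sector (\<Phi> l) (\<Phi> (Suc l)) \<inter> open_sector (\<Phi> m) (\<Phi> (Suc m)) = {}"
    if "l < m" "m < n" for l m
  proof (rule equals0I)
    fix x assume "x \<in> open_sector (\<Phi> l) (\<Phi> (Suc l)) \<inter> open_sector (\<Phi> m) (\<Phi> (Suc m))"
    then obtain r \<psi> r' \<psi>' where
      x: "x = rcis r \<psi>" "r > 0" "\<Phi> l < \<psi>" "\<psi> < \<Phi> (Suc l)" and
      x': "x = rcis r' \<psi>'" "r' > 0" "\<Phi> m < \<psi>'" "\<psi>' < \<Phi> (Suc m)"
      unfolding open_sector_def by blast
    have "\<Phi> 0 \<le> \<Phi> l" "\<Phi> (Suc l) \<le> \<Phi> m" "\<Phi> (Suc m) \<le> \<Phi> n"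
      using mono that by auto
    then have "\<psi> < \<psi>'" "\<psi>' - \<psi> < 2 * pi"
      using x x' start total by auto
    moreover have "\<psi> = \<psi>'"
      using rcis_eq_imp_angle_eq[of r \<psi> r' \<psi>'] x x' calculation by auto
    ultimately show False by simp
  qed
  then show ?disjoint
    by (metis Int_commute linorder_neqE_nat)
qed

lemma open_sectors_cover_iff:
  fixes \<Phi> :: "nat \<Rightarrow> real"
  assumes start: "\<Phi> 0 = 0" and steps: "\<And>l. l < n \<Longrightarrow> \<Phi> l \<le> \<Phi> (Suc l)"
  shows "(\<Union>l<n. closure (open_sector (\<Phi> l) (\<Phi> (Suc l)))) = UNIV \<longleftrightarrow> 2 * pi \<le> \<Phi> n"
proof
  assume cover: "(\<Union>l<n. closure (open_sector (\<Phi> l) (\<Phi> (Suc l)))) = UNIV"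
  show "2 * pi \<le> \<Phi> n"
  proof (rule ccontr)
    assume short: "\<not> 2 * pi \<le> \<Phi> n"
    define \<psi> where "\<psi> = (\<Phi> n + 2 * pi) / 2"
    have mono: "\<Phi> i \<le> \<Phi> j" if "i \<le> j" "j \<le> n" for i j
      using lift_Suc_mono_le_ivl[of "{..<n}" \<Phi> i j] steps that by fastforce
    obtain l where l: "l < n" "rcis 1 \<psi> \<in> complex_cone (\<Phi> l) (\<Phi> (Suc l))"
      using cover closure_open_sector_subset by blast
    then obtain \<phi> where \<phi>: "\<phi> \<in> closed_segment (\<Phi> l) (\<Phi> (Suc l))" "rcis 1 \<psi> = rcis 1 \<phi>"
      by (auto simp: in_complex_cone_iff)
    have "\<Phi> 0 \<le> \<Phi> l" "\<Phi> l \<le> \<Phi> (Suc l)" "\<Phi> (Suc l) \<le> \<Phi> n"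
      using mono l by auto
    then have "0 \<le> \<phi>" "\<phi> \<le> \<Phi> n"
      using \<phi>(1) start by (auto simp: closed_segment_eq_real_ivl)
    moreover have "\<bar>\<psi> - \<phi>\<bar> < 2 * pi"
      using calculation short pi_gt_zero unfolding \<psi>_def abs_less_iff by argo
    then have "\<psi> = \<phi>"
      using rcis_eq_imp_angle_eq[OF \<phi>(2)] by simp
    ultimately show False
      using short unfolding \<psi>_def by auto
  qed
next
  assume total: "2 * pi \<le> \<Phi> n"
  have "x \<in> (\<Union>l<n. closure (open_sector (\<Phi> l) (\<Phi> (Suc l))))" for x
  proof -
    have "x = rcis (cmod x) (Arg2pi x)" "0 \<le> Arg2pi x" "Arg2pi x < 2 * pi"
      using Arg2pi[of x] by (simp_all add: is_Arg_def rcis_def cis_conv_exp)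
    moreover obtain l where "l < n" "\<Phi> l \<le> Arg2pi x" "Arg2pi x < \<Phi> (Suc l)"
      using exists_crossing_step[of \<Phi> "Arg2pi x" n] calculation start total by auto
    ultimately show ?thesis
      by (metis UN_iff lessThan_iff norm_ge_zero rcis_mem_closure_open_sector)
  qed
  then show "(\<Union>l<n. closure (open_sector (\<Phi> l) (\<Phi> (Suc l)))) = UNIV"
    by blast
qed

definition sectors_tile :: "(nat \<Rightarrow> real) \<Rightarrow> nat \<Rightarrow> bool" where
  "sectors_tile \<Phi> n \<longleftrightarrow>
     (\<forall>l<n. \<forall>m<n. l \<noteq> m \<longrightarrow>
        open_sector (\<Phi> l) (\<Phi> (Suc l)) \<inter> open_sector (\<Phi> m) (\<Phi> (Suc m)) = {}) \<and>
     (\<Union>l<n. closure (open_sector (\<Phi> l) (\<Phi> (Suc l)))) = UNIV"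

lemma sectors_tile_iff:
  fixes \<Phi> :: "nat \<Rightarrow> real"
  assumes "\<Phi> 0 = 0"
    and "\<And>l. l < n \<Longrightarrow> \<Phi> l < \<Phi> (Suc l) \<and> \<Phi> (Suc l) \<le> \<Phi> l + 2 * pi"
  shows "sectors_tile \<Phi> n \<longleftrightarrow> \<Phi> n = 2 * pi"
  using open_sectors_disjoint_iff[OF assms] open_sectors_cover_iff[of \<Phi> n] assms
  unfolding sectors_tile_def by force

definition gluing_factor :: "nat \<Rightarrow> complex \<Rightarrow> complex" where
  "gluing_factor e \<zeta> = \<zeta> ^ e / cnj \<zeta> ^ (1 - e)"

lemma gluing_factor_polar:
  assumes "e \<in> {0, 1}" "\<zeta> \<noteq> 0"
  shows "gluing_factor e \<zeta> = rcis (cmod \<zeta> ^ e / cmod \<zeta> ^ (1 - e)) (Arg \<zeta>)"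
proof (cases "e = 1")
  case True
  then show ?thesis by (simp add: gluing_factor_def rcis_cmod_Arg)
next
  case False
  with assms(1) have "e = 0" by simp
  then have "gluing_factor e \<zeta> = inverse (rcis (cmod \<zeta>) (- Arg \<zeta>))"
    by (simp add: gluing_factor_def divide_inverse flip: rcis_cnj)
  also have "\<dots> = rcis (cmod \<zeta> ^ e / cmod \<zeta> ^ (1 - e)) (Arg \<zeta>)"
    using \<open>e = 0\<close> by (simp add: rcis_inverse)
  finally show ?thesis .
qed

lemma copy_edge_inv_eq_iff:
  assumes "e \<in> {0, 1}" "a \<noteq> 0" "\<zeta> \<noteq> 0"
  shows "copy_edge_inv e a b = \<zeta> \<longleftrightarrow> b = a * gluing_factor e \<zeta>"
proof (cases "e = 1")
  case True
  then show ?thesis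
    using assms by (auto simp: copy_edge_inv_def edge_inv_pos_def gluing_factor_def field_simps)
next
  case False
  with assms(1) have "e = 0" by simp
  have "cnj a / cnj b = \<zeta> \<longleftrightarrow> cnj b = cnj a / \<zeta>"
    using assms by (cases "b = 0") (auto simp: field_simps)
  also have "\<dots> \<longleftrightarrow> b = a / cnj \<zeta>"
    by (metis complex_cnj_cnj complex_cnj_divide)
  finally show ?thesis
    using \<open>e = 0\<close> by (simp add: copy_edge_inv_def edge_inv_pos_def gluing_factor_def)
qed

definition develop_vertex :: "(nat \<Rightarrow> complex) \<Rightarrow> (nat \<Rightarrow> nat) \<Rightarrow> nat \<Rightarrow> complex" where
  "develop_vertex z eps l = (\<Prod>k<l. gluing_factor (eps k) (z k))"

lemma develop_vertex_polar:
  assumes "\<forall>l<n. Im (z l) > 0" "\<forall>l<n. eps l \<in> {0, 1}" "l \<le> n"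
  shows "\<exists>\<rho>>0. develop_vertex z eps l = rcis \<rho> (\<Sum>k<l. Arg (z k))"
  using assms(3)
proof (induction l)
  case 0
  then show ?case by (simp add: develop_vertex_def)
next
  case (Suc l)
  then obtain \<rho> where "\<rho> > 0" "develop_vertex z eps l = rcis \<rho> (\<Sum>k<l. Arg (z k))"
    by auto
  moreover have "l < n" using Suc.prems by simp
  then have "z l \<noteq> 0" "eps l \<in> {0, 1}"
    using assms by fastforce+
  ultimately show ?case
    by (intro exI[of _ "\<rho> * (cmod (z l) ^ eps l / cmod (z l) ^ (1 - eps l))"])
      (auto simp: develop_vertex_def gluing_factor_polar rcis_mult)
qed

lemma develop_vertex_Suc:
  "develop_vertex z eps (Suc l) = develop_vertex z eps l * gluing_factor (eps l) (z l)"
  by (simp add: develop_vertex_def)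

lemma developing_seq_iff:
  assumes "\<forall>l<n. Im (z l) > 0" "\<forall>l<n. eps l \<in> {0, 1}"
  shows "developing_seq z eps n w \<longleftrightarrow> (\<forall>l\<le>n. w l = develop_vertex z eps l)"
proof -
  have nonzero: "develop_vertex z eps l \<noteq> 0" if "l \<le> n" for l
    using develop_vertex_polar[OF assms that] by fastforce
  have step: "copy_edge_inv (eps l) (develop_vertex z eps l) b = z l \<longleftrightarrow>
      b = develop_vertex z eps (Suc l)" if "l < n" for l b
    using copy_edge_inv_eq_iff[of "eps l" "develop_vertex z eps l" "z l" b] nonzero[of l] assms that
    by (force simp: develop_vertex_Suc)
  have turn: "Im (develop_vertex z eps (Suc l) / develop_vertex z eps l) > 0" if "l < n" for l
  proof -
    have "z l \<noteq> 0" "eps l \<in> {0, 1}" "0 < Arg (z l)" "Arg (z l) < pi"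
      using assms that Arg_lt_pi by fastforce+
    then show ?thesis
      using nonzero[of l] that by (simp add: develop_vertex_Suc gluing_factor_polar sin_gt_zero)
  qed
  show ?thesis
  proof
    assume dev: "developing_seq z eps n w"
    show "\<forall>l\<le>n. w l = develop_vertex z eps l"
    proof (intro allI impI)
      fix l assume "l \<le> n"
      then show "w l = develop_vertex z eps l"
      proof (induction l)
        case 0
        with dev show ?case by (simp add: developing_seq_def develop_vertex_def)
      next
        case (Suc l)
        then have "l < n" by simp
        with Suc dev step show ?case by (auto simp: developing_seq_def)
      qed
    qed
  next
    assume w: "\<forall>l\<le>n. w l = develop_vertex z eps l"
    show "developing_seq z eps n w"
      unfolding developing_seq_def
    proof (intro conjI allI impI)
      show "w 0 = 1" using w by (simp add: develop_vertex_def)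
    next
      fix l assume "l < n"
      then have "w l = develop_vertex z eps l" "w (Suc l) = develop_vertex z eps (Suc l)"
        using w by auto
      with \<open>l < n\<close> nonzero step turn
      show "w (Suc l) \<noteq> 0" "Im (w (Suc l) / w l) > 0" "copy_edge_inv (eps l) (w l) (w (Suc l)) = z l"
        by auto
    qed
  qed
qed

lemma hyperbolic_around_edge_iff_sectors_tile:
  assumes z: "\<forall>l<n. Im (z l) > 0" and eps: "\<forall>l<n. eps l \<in> {0, 1}"
  shows "hyperbolic_around_edge z eps n \<longleftrightarrow>
           develop_vertex z eps n = 1 \<and> sectors_tile (\<lambda>l. \<Sum>k<l. Arg (z k)) n"
proof -
  define \<Phi> where "\<Phi> l = (\<Sum>k<l. Arg (z k))" for l
  have wedge: "open_wedge (w l) (w (Suc l)) = open_sector (\<Phi> l) (\<Phi> (Suc l))"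
    if dev: "developing_seq z eps n w" and l: "l < n" for w l
  proof -
    obtain \<rho> \<sigma> where "\<rho> > 0" "develop_vertex z eps l = rcis \<rho> (\<Phi> l)"
      and "\<sigma> > 0" "develop_vertex z eps (Suc l) = rcis \<sigma> (\<Phi> (Suc l))"
      using develop_vertex_polar[OF z eps, of l] develop_vertex_polar[OF z eps, of "Suc l"] l
      unfolding \<Phi>_def by auto
    moreover have "0 < Arg (z l)" "Arg (z l) < pi"
      using z l Arg_lt_pi by blast+
    moreover have "w l = develop_vertex z eps l" "w (Suc l) = develop_vertex z eps (Suc l)"
      using dev l developing_seq_iff[OF z eps] by auto
    ultimately show ?thesis
      by (simp add: open_wedge_rcis_eq_open_sector \<Phi>_def)
  qed
  have tile: "(\<forall>l<n. \<forall>m<n. l \<noteq> m \<longrightarrow>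
                 open_wedge (w l) (w (Suc l)) \<inter> open_wedge (w m) (w (Suc m)) = {}) \<and>
              (\<Union>l<n. closure (open_wedge (w l) (w (Suc l)))) = UNIV \<longleftrightarrow> sectors_tile \<Phi> n"
    if "developing_seq z eps n w" for w
    using wedge[OF that] unfolding sectors_tile_def by simp
  have "hyperbolic_around_edge z eps n \<longleftrightarrow>
          (\<exists>w. developing_seq z eps n w \<and> w n = w 0 \<and> sectors_tile \<Phi> n)"
    unfolding hyperbolic_around_edge_def by (rule ex_cong1) (use tile in auto)
  also have "\<dots> \<longleftrightarrow> develop_vertex z eps n = 1 \<and> sectors_tile \<Phi> n"
    using developing_seq_iff[OF z eps] by (auto simp: develop_vertex_def)
  finally show ?thesis
    unfolding \<Phi>_def .
qed

theorem proposition2p2: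
  fixes z :: "nat \<Rightarrow> complex" and eps :: "nat \<Rightarrow> nat" and n :: nat
  assumes "\<forall>l<n. Im (z l) > 0"
    and "\<forall>l<n. eps l \<in> {0, 1}"
    and "n > 0 \<longrightarrow> eps 0 = 1"
  shows "hyperbolic_around_edge z eps n \<longleftrightarrow>
           (\<Prod>l<n. z l ^ eps l / cnj (z l) ^ (1 - eps l)) = 1 \<and>
           (\<Sum>l<n. Arg (z l)) = 2 * pi"
proof -
  have "develop_vertex z eps n = (\<Prod>l<n. z l ^ eps l / cnj (z l) ^ (1 - eps l))"
    by (simp add: develop_vertex_def gluing_factor_def)
  moreover have "sectors_tile (\<lambda>l. \<Sum>k<l. Arg (z k)) n \<longleftrightarrow> (\<Sum>l<n. Arg (z l)) = 2 * pi"
  proof (rule sectors_tile_iff)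
    fix l assume "l < n"
    then have "0 < Arg (z l)" "Arg (z l) < pi"
      using assms(1) Arg_lt_pi by blast+
    then show "(\<Sum>k<l. Arg (z k)) < (\<Sum>k<Suc l. Arg (z k)) \<and>
               (\<Sum>k<Suc l. Arg (z k)) \<le> (\<Sum>k<l. Arg (z k)) + 2 * pi"
      by simp
  qed simp
  ultimately show ?thesis
    using hyperbolic_around_edge_iff_sectors_tile[OF assms(1,2)] by simp
qed

end
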